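(* If $F_1$ and $F_2$ are forests with $X_{F_1}=X_{F_2}$, then $F_1$ and $F_2$ have the same number of leaves. That is, the number of leaves of a forest is determined by its chromatic symmetric function.
   Context: For a graph $G=(V,E)$ with $V=\{v_1,\dots,v_n\}$, a proper coloring is a map $\kappa:V\to\mathbb{N}$ with $\kappa(u)\ne\kappa(v)$ whenever $(u,v)\in E$. The chromatic symmetric function is $X_G=\sum_\kappa x_{\kappa(v_1)}\cdots x_{\kappa(v_n)}$, summed over proper colorings. A leaf is a vertex of degree exactly $1$. *)

theory Defs
  imports "HOL-Library.FuncSet"
begin

definition simple_graph :: "'a set \<Rightarrow> 'a set set \<Rightarrow> bool" where
  "simple_graph V E \<longleftrightarrow> finite V \<and>
     (\<forall>e\<in>E. \<exists>u v. u \<in> V \<and> v \<in> V \<and> u \<noteq> v \<and> e = {u, v})"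

definition is_cycle :: "'a set set \<Rightarrow> 'a list \<Rightarrow> bool" where
  "is_cycle E vs \<longleftrightarrow> length vs \<ge> 3 \<and> distinct vs \<and>
     (\<forall>i < length vs. {vs ! i, vs ! ((i + 1) mod length vs)} \<in> E)"

definition forest :: "'a set \<Rightarrow> 'a set set \<Rightarrow> bool" where
  "forest V E \<longleftrightarrow> simple_graph V E \<and> \<not> (\<exists>vs. is_cycle E vs)"

definition degree :: "'a set set \<Rightarrow> 'a \<Rightarrow> nat" where
  "degree E v = card {u. {u, v} \<in> E}"

definition leaves :: "'a set \<Rightarrow> 'a set set \<Rightarrow> 'a set" where
  "leaves V E = {v \<in> V. degree E v = 1}"

definition proper_coloring :: "'a set \<Rightarrow> 'a set set \<Rightarrow> ('a \<Rightarrow> nat) \<Rightarrow> bool" where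
  "proper_coloring V E \<kappa> \<longleftrightarrow> \<kappa> \<in> V \<rightarrow>\<^sub>E UNIV \<and>
     (\<forall>u v. {u, v} \<in> E \<and> u \<noteq> v \<longrightarrow> \<kappa> u \<noteq> \<kappa> v)"

text \<open>The chromatic symmetric function X_G, represented by its coefficients:
  the coefficient of the monomial \<Prod>i. x_i^(\<alpha> i) is the number of proper
  colorings \<kappa> with exactly \<alpha> i vertices of color i, for every i.
  Two formal power series are equal iff all coefficients agree.\<close>

definition csf :: "'a set \<Rightarrow> 'a set set \<Rightarrow> (nat \<Rightarrow> nat) \<Rightarrow> nat" where
  "csf V E \<alpha> = card {\<kappa>. proper_coloring V E \<kappa> \<and>
                         (\<forall>i. card {v \<in> V. \<kappa> v = i} = \<alpha> i)}"

end

theory Submission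
  imports Defs "HOL-Library.Multiset" "HOL-Library.Transitive_Closure_Table"
begin

text \<open>
  Inclusion--exclusion over the edge sets \<open>S \<subseteq> E\<close> expands the chromatic symmetric function as
  \<open>X\<^sub>G = (\<Sum>S\<subseteq>E. (-1)^|S| p\<^bsub>\<lambda>(S)\<^esub>)\<close>, where \<open>\<lambda>(S)\<close> is the partition of \<open>|V|\<close> formed by the
  component sizes of \<open>(V, S)\<close>. The power sums \<open>p\<^sub>\<lambda>\<close> are linearly independent, so \<open>X\<^sub>G\<close> determines
  the signed counts \<open>\<Sum>\<lambda>(S) = \<lambda>. (-1)^|S|\<close>. In a forest every \<open>S\<close> has \<open>|V| - |S|\<close> components,
  so nothing cancels and \<open>X\<^sub>G\<close> determines how many \<open>S\<close> have \<open>\<lambda>(S) = \<lambda>\<close>. These numbers give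
  \<open>|V|\<close>, \<open>|E|\<close> and the totals \<open>T k\<close> of singleton components over all \<open>S\<close> with \<open>k\<close> components.
  The only \<open>S\<close> with \<open>|V| - |E|\<close> components is \<open>E\<close>, those with one more are the \<open>E - {e}\<close>, and
  deleting \<open>e\<close> isolates exactly the leaves on \<open>e\<close>; hence the number of leaves is
  \<open>T (|V| - |E| + 1) - |E| * T (|V| - |E|)\<close>.
\<close>

lemma bij_betw_Collect:
  assumes "bij_betw f A B" and "\<And>x. x \<in> A \<Longrightarrow> P (f x) \<longleftrightarrow> Q x"
  shows "bij_betw f {x \<in> A. Q x} {y \<in> B. P y}"
  using assms by (auto simp: bij_betw_def inj_on_def)

lemma count_image_mset_mset_set:
  "finite X \<Longrightarrow> count (image_mset f (mset_set X)) y = card {x \<in> X. f x = y}"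
  by (simp add: count_image_mset Int_def conj_commute vimage_def)

lemma image_mset_nth_lessThan: "image_mset ((!) xs) (mset_set {..<length xs}) = mset xs"
  by (metis map_nth mset_map mset_upt atLeast0LessThan)

lemma nth_sorted_list_of_multiset_in: "i < size M \<Longrightarrow> sorted_list_of_multiset M ! i \<in># M"
  by (metis mset_sorted_list_of_multiset nth_mem set_mset_mset size_mset)

lemma image_mset_sorted_list_of_multiset:
  "image_mset ((!) (sorted_list_of_multiset M)) (mset_set {..<size M}) = M"
  by (metis image_mset_nth_lessThan mset_sorted_list_of_multiset size_mset)

lemma image_mset_eq_imp_bij_betw:
  assumes "finite A" "finite B" "image_mset w (mset_set A) = image_mset w' (mset_set B)"
  obtains f where "bij_betw f A B" "\<And>a. a \<in> A \<Longrightarrow> w' (f a) = w a"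
proof -
  have "\<exists>f. bij_betw f A B \<and> (\<forall>a\<in>A. w' (f a) = w a)"
    using assms
  proof (induction A arbitrary: B rule: finite_induct)
    case empty
    then show ?case by (simp add: mset_set_empty_iff bij_betw_def)
  next
    case (insert a A)
    have "w a \<in># image_mset w' (mset_set B)"
      using insert.hyps insert.prems(2)[symmetric] by simp
    then obtain b where b: "b \<in> B" "w' b = w a" using insert.prems(1) by auto
    then have "image_mset w (mset_set A) = image_mset w' (mset_set (B - {b}))"
      using insert.hyps insert.prems by (simp add: mset_set.remove)
    then obtain f where f: "bij_betw f A (B - {b})" "\<forall>x\<in>A. w' (f x) = w x"
      using insert.IH insert.prems(1) by blast
    have "bij_betw (f(a := b)) A (B - {b})"
      using f(1) insert.hyps(2) by (metis bij_betw_cong fun_upd_other)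
    then have "bij_betw (f(a := b)) (A \<union> {a}) (B - {b} \<union> {b})"
      using notIn_Un_bij_betw[of a A "f(a := b)" "B - {b}"] insert.hyps(2) by simp
    then have "bij_betw (f(a := b)) (insert a A) B"
      using b(1) by (simp add: insert_absorb)
    moreover have "\<forall>x\<in>insert a A. w' ((f(a := b)) x) = w x"
      using f(2) b(2) insert.hyps(2) by auto
    ultimately show ?case by blast
  qed
  then show ?thesis using that by blast
qed

lemma int_card_sieve:
  assumes I: "finite I" and A: "finite A"
  shows "int (card {x \<in> A. \<forall>i\<in>I. \<not> P i x})
    = (\<Sum>B\<in>Pow I. (-1) ^ card B * int (card {x \<in> A. \<forall>i\<in>B. P i x}))"
proof -
  define f where "f X = int (card (A \<inter> X))" for X
  define G where "G i = {x. P i x}" for i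
  have "f (X \<union> Y) = f X + f Y" if "disjnt X Y" for X Y
    using that A by (simp add: f_def Int_Un_distrib card_Un_disjnt disjnt_def inf_assoc inf_left_commute)
  then have incl_excl: "f (\<Union>(G ` I)) = (\<Sum>B | B \<subseteq> I \<and> B \<noteq> {}. (-1) ^ (card B + 1) * f (\<Inter>(G ` B)))"
    using I by (rule Incl_Excl_UN)
  have card_eq: "int (card {x \<in> A. \<forall>i\<in>B. P i x}) = f (\<Inter>(G ` B))" for B
    unfolding f_def G_def by (rule arg_cong[where f = "\<lambda>X. int (card X)"]) auto
  have "int (card {x \<in> A. \<forall>i\<in>I. \<not> P i x}) = int (card A) - f (\<Union>(G ` I))"
  proof -
    have "{x \<in> A. \<forall>i\<in>I. \<not> P i x} = A - A \<inter> \<Union>(G ` I)"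
      by (auto simp: G_def)
    then show ?thesis
      using A by (simp add: f_def card_Diff_subset of_nat_diff card_mono)
  qed
  also have "\<dots> = f (\<Inter>(G ` {})) + (\<Sum>B | B \<subseteq> I \<and> B \<noteq> {}. (-1) ^ card B * f (\<Inter>(G ` B)))"
  proof -
    have "- f (\<Union>(G ` I)) = (\<Sum>B | B \<subseteq> I \<and> B \<noteq> {}. (-1) ^ card B * f (\<Inter>(G ` B)))"
      unfolding incl_excl by (simp flip: sum_negf)
    then show ?thesis by (simp add: f_def)
  qed
  also have "\<dots> = (\<Sum>B\<in>Pow I. (-1) ^ card B * f (\<Inter>(G ` B)))"
  proof -
    have "Pow I = insert {} {B. B \<subseteq> I \<and> B \<noteq> {}}" by auto
    then show ?thesis using I by simp
  qed
  finally show ?thesis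
    by (simp add: card_eq)
qed

lemma subset_card_plus_one_iff:
  assumes "finite A" and "B \<subseteq> A"
  shows "card B + 1 = card A \<longleftrightarrow> (\<exists>a\<in>A. B = A - {a})"
proof
  assume "card B + 1 = card A"
  then have "card (A - B) = 1"
    using assms by (simp add: card_Diff_subset finite_subset)
  then obtain a where "A - B = {a}"
    by (rule card_1_singletonE)
  then show "\<exists>a\<in>A. B = A - {a}"
    using assms(2) by blast
next
  assume "\<exists>a\<in>A. B = A - {a}"
  then show "card B + 1 = card A"
    using assms(1) card_Suc_Diff1 by fastforce
qed

section \<open>Coefficients of products of power sums\<close>

text \<open>The coefficient of the monomial \<open>\<Prod>i. x\<^sub>i ^ \<alpha> i\<close> in the product of power sums
  \<open>\<Prod>a\<in>A. p\<^bsub>w a\<^esub>\<close>, where \<open>p\<^sub>k = \<Sum>i. x\<^sub>i ^ k\<close>: expanding the product means choosing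
  a variable \<open>x\<^bsub>h a\<^esub>\<close> for every factor.\<close>

definition psum_coeff :: "'c set \<Rightarrow> ('c \<Rightarrow> nat) \<Rightarrow> (nat \<Rightarrow> nat) \<Rightarrow> nat" where
  "psum_coeff A w \<alpha> = card {h \<in> A \<rightarrow>\<^sub>E UNIV. \<forall>i. (\<Sum>a\<in>{a \<in> A. h a = i}. w a) = \<alpha> i}"

definition p_coeff :: "nat multiset \<Rightarrow> (nat \<Rightarrow> nat) \<Rightarrow> nat" where
  "p_coeff \<mu> = psum_coeff {..<size \<mu>} ((!) (sorted_list_of_multiset \<mu>))"

definition parts :: "nat multiset \<Rightarrow> nat \<Rightarrow> nat" where
  "parts \<mu> i = (if i < size \<mu> then sorted_list_of_multiset \<mu> ! i else 0)"

lemma psum_coeff_bij_betw: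
  assumes f: "bij_betw f A B" and w: "\<And>a. a \<in> A \<Longrightarrow> w' (f a) = w a"
  shows "psum_coeff A w \<alpha> = psum_coeff B w' \<alpha>"
proof -
  define \<Gamma> where "\<Gamma> g = restrict (g \<circ> f) A" for g :: "_ \<Rightarrow> nat"
  have inv: "f (inv_into A f b) = b" "inv_into A f b \<in> A" if "b \<in> B" for b
    using f that by (auto simp: bij_betw_def f_inv_into_f inv_into_into)
  have "bij_betw \<Gamma> (B \<rightarrow>\<^sub>E UNIV) (A \<rightarrow>\<^sub>E UNIV)"
  proof (rule bij_betwI[where g = "\<lambda>h. restrict (h \<circ> inv_into A f) B"])
    show "restrict (\<Gamma> g \<circ> inv_into A f) B = g" if "g \<in> B \<rightarrow>\<^sub>E UNIV" for g
      using that inv by (auto simp: \<Gamma>_def fun_eq_iff PiE_iff extensional_def)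
    show "\<Gamma> (restrict (h \<circ> inv_into A f) B) = h" if "h \<in> A \<rightarrow>\<^sub>E UNIV" for h
      using that f by (auto simp: \<Gamma>_def fun_eq_iff PiE_iff bij_betw_def extensional_def)
  qed (auto simp: \<Gamma>_def)
  moreover have "(\<Sum>a\<in>{a \<in> A. \<Gamma> g a = i}. w a) = (\<Sum>b\<in>{b \<in> B. g b = i}. w' b)" for g i
  proof -
    have "(\<Sum>a\<in>{a \<in> A. \<Gamma> g a = i}. w a) = (\<Sum>a\<in>{a \<in> A. g (f a) = i}. w' (f a))"
      using w by (intro sum.cong) (auto simp: \<Gamma>_def)
    also have "\<dots> = (\<Sum>b\<in>{b \<in> B. g b = i}. w' b)"
      by (intro sum.reindex_bij_betw bij_betw_Collect[OF f]) simp
    finally show ?thesis .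
  qed
  ultimately have "bij_betw \<Gamma> {g \<in> B \<rightarrow>\<^sub>E UNIV. \<forall>i. (\<Sum>b\<in>{b \<in> B. g b = i}. w' b) = \<alpha> i}
      {h \<in> A \<rightarrow>\<^sub>E UNIV. \<forall>i. (\<Sum>a\<in>{a \<in> A. h a = i}. w a) = \<alpha> i}"
    by (intro bij_betw_Collect) simp_all
  then show ?thesis
    unfolding psum_coeff_def by (simp add: bij_betw_same_card)
qed

lemma psum_coeff_eq_p_coeff:
  assumes "finite A"
  shows "psum_coeff A w = p_coeff (image_mset w (mset_set A))"
proof
  fix \<alpha>
  let ?\<mu> = "image_mset w (mset_set A)"
  obtain f where "bij_betw f A {..<size ?\<mu>}" "\<And>a. a \<in> A \<Longrightarrow> sorted_list_of_multiset ?\<mu> ! f a = w a"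
    using image_mset_eq_imp_bij_betw[OF assms, of "{..<size ?\<mu>}"]
    by (metis finite_lessThan image_mset_sorted_list_of_multiset)
  then show "psum_coeff A w \<alpha> = p_coeff ?\<mu> \<alpha>"
    unfolding p_coeff_def by (rule psum_coeff_bij_betw)
qed

lemma finite_psum_coeff_set:
  fixes w :: "'c \<Rightarrow> nat" and \<alpha> :: "nat \<Rightarrow> nat"
  assumes "finite A" and "\<And>a. a \<in> A \<Longrightarrow> w a > 0" and "finite {i. \<alpha> i > 0}"
  shows "finite {h \<in> A \<rightarrow>\<^sub>E UNIV. \<forall>i. (\<Sum>a\<in>{a \<in> A. h a = i}. w a) = \<alpha> i}"
proof (rule finite_subset)
  show "finite (A \<rightarrow>\<^sub>E {i. \<alpha> i > 0})"
    using assms by (intro finite_PiE) auto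
  have "\<alpha> (h a) > 0" if "a \<in> A" and "\<forall>i. (\<Sum>a\<in>{a \<in> A. h a = i}. w a) = \<alpha> i" for h a
  proof -
    have "w a \<le> (\<Sum>x\<in>{x \<in> A. h x = h a}. w x)"
      using that(1) assms(1) by (subst sum.remove[of _ a]) simp_all
    then show ?thesis
      using that assms(2) by (metis order_less_le_trans)
  qed
  then show "{h \<in> A \<rightarrow>\<^sub>E UNIV. \<forall>i. (\<Sum>a\<in>{a \<in> A. h a = i}. w a) = \<alpha> i} \<subseteq> A \<rightarrow>\<^sub>E {i. \<alpha> i > 0}"
    by (auto simp: PiE_def)
qed

lemma parts_pos: "0 \<notin># \<mu> \<Longrightarrow> i < size \<mu> \<Longrightarrow> parts \<mu> i > 0"
  using nth_sorted_list_of_multiset_in[of i \<mu>] by (auto simp: parts_def intro: gr0I)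

lemma p_coeff_parts_pos:
  assumes "0 \<notin># \<mu>"
  shows "p_coeff \<mu> (parts \<mu>) > 0"
proof -
  let ?A = "{..<size \<mu>}" and ?w = "(!) (sorted_list_of_multiset \<mu>)"
  let ?H = "{h \<in> ?A \<rightarrow>\<^sub>E UNIV. \<forall>i. (\<Sum>a\<in>{a \<in> ?A. h a = i}. ?w a) = parts \<mu> i}"
  have "(\<Sum>a\<in>{a \<in> ?A. restrict id ?A a = i}. ?w a) = parts \<mu> i" for i
  proof (cases "i < size \<mu>")
    case True
    then have "{a \<in> ?A. restrict id ?A a = i} = {i}" by auto
    then show ?thesis using True by (simp add: parts_def)
  qed (simp add: parts_def)
  then have "restrict id ?A \<in> ?H" by simp
  moreover have "finite ?H"
  proof (rule finite_psum_coeff_set)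
    show "?w a > 0" if "a \<in> ?A" for a
      using that parts_pos[OF assms, of a] by (simp add: parts_def)
    show "finite {i. parts \<mu> i > 0}"
      by (rule finite_subset[of _ ?A]) (auto simp: parts_def split: if_splits)
  qed simp
  ultimately have "card ?H > 0"
    unfolding card_gt_0_iff by blast
  then show ?thesis
    unfolding p_coeff_def psum_coeff_def .
qed

lemma fiber_sums_eq_parts_imp_subset_image:
  assumes "0 \<notin># \<mu>" and h: "\<And>i. (\<Sum>a\<in>{a \<in> A. h a = i}. w a) = parts \<mu> i"
  shows "{..<size \<mu>} \<subseteq> h ` A"
proof
  fix i assume i: "i \<in> {..<size \<mu>}"
  have "{a \<in> A. h a = i} \<noteq> {}"
  proof
    assume "{a \<in> A. h a = i} = {}"
    then have "parts \<mu> i = 0" using h[of i] by (metis sum.empty)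
    then show False using parts_pos[OF assms(1)] i by fastforce
  qed
  then show "i \<in> h ` A" by blast
qed

lemma psum_coeff_parts_pos_imp:
  fixes w :: "'c \<Rightarrow> nat"
  assumes A: "finite A" and \<mu>: "0 \<notin># \<mu>" and pos: "psum_coeff A w (parts \<mu>) > 0"
  shows "size \<mu> \<le> card A" and "card A = size \<mu> \<Longrightarrow> image_mset w (mset_set A) = \<mu>"
proof -
  have "{h \<in> A \<rightarrow>\<^sub>E UNIV. \<forall>i. (\<Sum>a\<in>{a \<in> A. h a = i}. w a) = parts \<mu> i} \<noteq> {}"
    using pos unfolding psum_coeff_def by (metis card.empty less_irrefl)
  then obtain h where h: "\<And>i. (\<Sum>a\<in>{a \<in> A. h a = i}. w a) = parts \<mu> i"
    by blast
  have hit: "{..<size \<mu>} \<subseteq> h ` A"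
    using \<mu> h by (rule fiber_sums_eq_parts_imp_subset_image)
  have le: "size \<mu> \<le> card (h ` A)"
    using card_mono[OF finite_imageI[OF A] hit] by simp
  then show "size \<mu> \<le> card A"
    using card_image_le[OF A, of h] by linarith
  assume eq: "card A = size \<mu>"
  then have "card (h ` A) = card A"
    using le card_image_le[OF A, of h] by linarith
  then have inj: "inj_on h A" and im: "h ` A = {..<size \<mu>}"
    using inj_on_iff_eq_card[OF A] card_subset_eq[OF finite_imageI[OF A] hit] eq by auto
  have "w a = sorted_list_of_multiset \<mu> ! h a" if "a \<in> A" for a
  proof -
    have "{x \<in> A. h x = h a} = {a}" using inj that by (auto dest: inj_onD)
    then show ?thesis using h[of "h a"] im that by (auto simp: parts_def)
  qed
  then have "image_mset w (mset_set A) = image_mset (\<lambda>a. sorted_list_of_multiset \<mu> ! h a) (mset_set A)"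
    using A by (intro image_mset_cong) simp
  also have "\<dots> = image_mset ((!) (sorted_list_of_multiset \<mu>)) (image_mset h (mset_set A))"
    by (simp add: image_mset.compositionality comp_def)
  also have "\<dots> = \<mu>"
    using image_mset_mset_set[OF inj] im image_mset_sorted_list_of_multiset by simp
  finally show "image_mset w (mset_set A) = \<mu>" .
qed

lemma p_coeff_parts_pos_imp_eq:
  assumes "0 \<notin># \<mu>" and "p_coeff \<nu> (parts \<mu>) > 0" and "size \<nu> \<le> size \<mu>"
  shows "\<nu> = \<mu>"
proof -
  have "psum_coeff {..<size \<nu>} ((!) (sorted_list_of_multiset \<nu>)) (parts \<mu>) > 0"
    using assms(2) by (simp add: p_coeff_def)
  from psum_coeff_parts_pos_imp[OF finite_lessThan assms(1) this] assms(3)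
  have "image_mset ((!) (sorted_list_of_multiset \<nu>)) (mset_set {..<size \<nu>}) = \<mu>"
    by simp
  then show ?thesis
    by (simp add: image_mset_sorted_list_of_multiset)
qed

text \<open>By triangularity (\<open>p_coeff_parts_pos_imp_eq\<close>), at the exponent \<open>parts \<mu>\<^sub>0\<close> of a longest
  \<open>\<mu>\<^sub>0\<close> with nonzero coefficient only the term of \<open>\<mu>\<^sub>0\<close> survives.\<close>

lemma p_coeff_linear_independent:
  fixes c :: "nat multiset \<Rightarrow> int"
  assumes L: "finite L" and no0: "\<And>\<mu>. \<mu> \<in> L \<Longrightarrow> 0 \<notin># \<mu>"
    and zero: "\<And>\<alpha>. (\<Sum>\<mu>\<in>L. c \<mu> * int (p_coeff \<mu> \<alpha>)) = 0"
    and "\<mu> \<in> L"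
  shows "c \<mu> = 0"
proof (rule ccontr)
  assume "c \<mu> \<noteq> 0"
  define D where "D = {\<nu> \<in> L. c \<nu> \<noteq> 0}"
  have "finite D" "D \<noteq> {}"
    using L \<open>\<mu> \<in> L\<close> \<open>c \<mu> \<noteq> 0\<close> by (auto simp: D_def)
  then have "Max (size ` D) \<in> size ` D"
    by simp
  then obtain \<mu>\<^sub>0 where "\<mu>\<^sub>0 \<in> D" "size \<mu>\<^sub>0 = Max (size ` D)"
    by auto
  with \<open>finite D\<close> have \<mu>\<^sub>0: "\<mu>\<^sub>0 \<in> D" "\<And>\<nu>. \<nu> \<in> D \<Longrightarrow> size \<nu> \<le> size \<mu>\<^sub>0"
    by simp_all
  have "\<mu>\<^sub>0 \<in> L" and "c \<mu>\<^sub>0 \<noteq> 0"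
    using \<mu>\<^sub>0(1) by (simp_all add: D_def)
  have "(\<Sum>\<nu>\<in>L. c \<nu> * int (p_coeff \<nu> (parts \<mu>\<^sub>0)))
      = c \<mu>\<^sub>0 * int (p_coeff \<mu>\<^sub>0 (parts \<mu>\<^sub>0)) + (\<Sum>\<nu>\<in>L - {\<mu>\<^sub>0}. c \<nu> * int (p_coeff \<nu> (parts \<mu>\<^sub>0)))"
    by (rule sum.remove[OF L \<open>\<mu>\<^sub>0 \<in> L\<close>])
  also have "(\<Sum>\<nu>\<in>L - {\<mu>\<^sub>0}. c \<nu> * int (p_coeff \<nu> (parts \<mu>\<^sub>0))) = 0"
  proof (rule sum.neutral, rule ballI)
    fix \<nu> assume "\<nu> \<in> L - {\<mu>\<^sub>0}"
    then show "c \<nu> * int (p_coeff \<nu> (parts \<mu>\<^sub>0)) = 0"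
      using \<mu>\<^sub>0 no0[OF \<open>\<mu>\<^sub>0 \<in> L\<close>] p_coeff_parts_pos_imp_eq[of \<mu>\<^sub>0 \<nu>] by (auto simp: D_def)
  qed
  finally have "c \<mu>\<^sub>0 * int (p_coeff \<mu>\<^sub>0 (parts \<mu>\<^sub>0)) = 0"
    using zero by simp
  moreover have "p_coeff \<mu>\<^sub>0 (parts \<mu>\<^sub>0) > 0"
    by (rule p_coeff_parts_pos[OF no0[OF \<open>\<mu>\<^sub>0 \<in> L\<close>]])
  ultimately show False
    using \<open>c \<mu>\<^sub>0 \<noteq> 0\<close> by simp
qed

section \<open>Components of spanning subgraphs\<close>

definition adj :: "'a set set \<Rightarrow> ('a \<times> 'a) set" where
  "adj S = {(x, y). {x, y} \<in> S}"

definition component :: "'a set set \<Rightarrow> 'a \<Rightarrow> 'a set" where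
  "component S x = {y. (x, y) \<in> (adj S)\<^sup>*}"

definition components :: "'a set \<Rightarrow> 'a set set \<Rightarrow> 'a set set" where
  "components V S = component S ` V"

definition component_sizes :: "'a set \<Rightarrow> 'a set set \<Rightarrow> nat multiset" where
  "component_sizes V S = image_mset card (mset_set (components V S))"

definition monochromatic :: "('a \<Rightarrow> nat) \<Rightarrow> 'a set \<Rightarrow> bool" where
  "monochromatic \<kappa> e \<longleftrightarrow> (\<forall>x\<in>e. \<forall>y\<in>e. \<kappa> x = \<kappa> y)"

lemma adj_insert: "adj (insert {u, v} S) = adj S \<union> {(u, v), (v, u)}"
  by (auto simp: adj_def doubleton_eq_iff)

lemma sym_adj: "sym (adj S)"
  by (auto simp: sym_def adj_def insert_commute)

lemma component_self: "x \<in> component S x"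
  by (simp add: component_def)

lemma mem_component_commute: "y \<in> component S x \<longleftrightarrow> x \<in> component S y"
  using sym_rtrancl[OF sym_adj, of S] unfolding component_def sym_def by blast

lemma component_eq:
  assumes "y \<in> component S x"
  shows "component S y = component S x"
proof -
  have "(x, y) \<in> (adj S)\<^sup>*" and "(y, x) \<in> (adj S)\<^sup>*"
    using assms mem_component_commute[of y S x] unfolding component_def by simp_all
  then show ?thesis
    unfolding component_def by (blast intro: rtrancl_trans)
qed

lemma component_step: "y \<in> component S x \<Longrightarrow> (y, z) \<in> adj S \<Longrightarrow> z \<in> component S x"
  by (simp add: component_def rtrancl_into_rtrancl)

lemma component_mono: "S \<subseteq> T \<Longrightarrow> component S x \<subseteq> component T x"
proof -
  assume "S \<subseteq> T"
  then have "adj S \<subseteq> adj T" by (auto simp: adj_def)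
  then show ?thesis unfolding component_def using rtrancl_mono by blast
qed

lemma components_disjoint:
  assumes "C \<in> components V S" and "D \<in> components V S" and "C \<noteq> D"
  shows "C \<inter> D = {}"
proof -
  obtain x y where "C = component S x" and "D = component S y"
    using assms(1,2) by (auto simp: components_def)
  then show ?thesis
    using component_eq[of _ S x] component_eq[of _ S y] assms(3) by blast
qed

lemma componentsE:
  assumes "C \<in> components V S"
  obtains x where "x \<in> V" "C = component S x"
  using assms by (auto simp: components_def)

lemma pairwise_disjnt_components: "pairwise disjnt (components V S)"
  unfolding pairwise_def disjnt_def using components_disjoint by blast

lemma monochromatic_component:
  assumes "\<forall>e\<in>S. monochromatic \<kappa> e" and "y \<in> component S x"
  shows "\<kappa> y = \<kappa> x"
proof -
  have "(x, y) \<in> (adj S)\<^sup>*"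
    using assms(2) by (simp add: component_def)
  then show ?thesis
  proof (induction rule: rtrancl_induct)
    case (step y z)
    then have "{y, z} \<in> S" by (simp add: adj_def)
    then have "monochromatic \<kappa> {y, z}" using assms(1) by blast
    then have "\<kappa> z = \<kappa> y" unfolding monochromatic_def by blast
    then show ?case using step.IH by simp
  qed simp
qed

lemma component_insert_edge_subset:
  "component (insert {u, v} S) x \<subseteq>
    (if x \<in> component S u \<union> component S v then component S u \<union> component S v else component S x)"
  (is "_ \<subseteq> ?T")
proof
  let ?U = "component S u \<union> component S v"
  have shared: "x \<in> component S w" if "y \<in> component S x" and "y \<in> component S w" for y w
    using component_eq[OF that(1)] component_eq[OF that(2)] component_self[of x S] by simp
  have closed: "z \<in> ?T" if y: "y \<in> ?T" and yz: "(y, z) \<in> adj (insert {u, v} S)" for y z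
  proof (cases "(y, z) \<in> adj S")
    case True
    then show ?thesis
      using y component_step[OF _ True] by (cases "x \<in> ?U") auto
  next
    case False
    then have "y \<in> ?U" and "z \<in> ?U"
      using yz component_self[of u S] component_self[of v S] by (auto simp: adj_insert)
    moreover have "x \<in> ?U" if "x \<notin> ?U"
      using that y \<open>y \<in> ?U\<close> shared[of y u] shared[of y v] by auto
    ultimately show ?thesis
      by auto
  qed
  fix y assume "y \<in> component (insert {u, v} S) x"
  then have "(x, y) \<in> (adj (insert {u, v} S))\<^sup>*"
    by (simp add: component_def)
  then show "y \<in> ?T"
  proof induction
    case base
    show ?case using component_self[of x S] by auto
  next
    case (step y z)
    show ?case by (rule closed[OF step.IH step.hyps(2)])
  qed
qed

lemma component_insert_edge:
  "component (insert {u, v} S) x =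
    (if x \<in> component S u \<union> component S v then component S u \<union> component S v else component S x)"
  (is "?C x = ?T")
proof (rule antisym[OF component_insert_edge_subset])
  let ?U = "component S u \<union> component S v"
  have mono: "component S w \<subseteq> ?C w" for w
    by (rule component_mono) auto
  have "v \<in> ?C u"
    by (simp add: component_def adj_insert r_into_rtrancl)
  then have "?C v = ?C u"
    by (rule component_eq)
  then have U: "?U \<subseteq> ?C u"
    using mono[of u] mono[of v] by auto
  show "?T \<subseteq> ?C x"
  proof (cases "x \<in> ?U")
    case True
    then have "?C x = ?C u"
      using U by (intro component_eq) auto
    then show ?thesis
      using True U by simp
  qed (simp add: mono)
qed

lemma components_insert_edge:
  assumes "u \<in> V" and "v \<in> V"
  shows "components V (insert {u, v} S) = insert (component S u \<union> component S v)
    (components V S - {component S u, component S v})"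
    (is "_ = insert ?U (_ - {?Cu, ?Cv})")
proof -
  have outside: "component (insert {u, v} S) x = component S x" if "x \<notin> ?U" for x
    using that by (simp add: component_insert_edge)
  have inside: "component (insert {u, v} S) x = ?U" if "x \<in> ?U" for x
    using that by (simp add: component_insert_edge)
  have old: "component S x \<in> {?Cu, ?Cv} \<longleftrightarrow> x \<in> ?U" for x
    using component_eq[of x S u] component_eq[of x S v] component_self[of x S] by auto
  show ?thesis
  proof
    show "components V (insert {u, v} S) \<subseteq> insert ?U (components V S - {?Cu, ?Cv})"
    proof
      fix C assume "C \<in> components V (insert {u, v} S)"
      then obtain x where "x \<in> V" "C = component (insert {u, v} S) x"
        by (rule componentsE)
      then show "C \<in> insert ?U (components V S - {?Cu, ?Cv})"
        using inside outside old by (cases "x \<in> ?U") (auto simp: components_def)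
    qed
    have "?U \<in> components V (insert {u, v} S)"
      using inside[of u] component_self[of u S] assms(1) by (auto simp: components_def)
    moreover have "C \<in> components V (insert {u, v} S)" if C: "C \<in> components V S - {?Cu, ?Cv}" for C
    proof -
      obtain x where "x \<in> V" "C = component S x" "component S x \<notin> {?Cu, ?Cv}"
        using C by (auto simp: components_def)
      then show ?thesis
        using outside[of x] old[of x] by (auto simp: components_def)
    qed
    ultimately show "insert ?U (components V S - {?Cu, ?Cv}) \<subseteq> components V (insert {u, v} S)"
      by blast
  qed
qed

lemma card_components_insert_edge:
  assumes "finite V" and "u \<in> V" and "v \<in> V" and "v \<notin> component S u"
  shows "card (components V (insert {u, v} S)) + 1 = card (components V S)"
proof -
  let ?Cu = "component S u" and ?Cv = "component S v"
  have in_components: "?Cu \<in> components V S" "?Cv \<in> components V S"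
    using assms(2,3) by (auto simp: components_def)
  have distinct: "?Cu \<noteq> ?Cv"
    using assms(4) component_self[of v S] by auto
  have "?Cu \<union> ?Cv \<notin> components V S"
  proof
    assume "?Cu \<union> ?Cv \<in> components V S"
    then obtain x where x: "?Cu \<union> ?Cv = component S x"
      by (auto simp: components_def)
    then have "u \<in> component S x"
      using component_self[of u S] by blast
    then have "?Cu = component S x"
      by (rule component_eq)
    moreover have "v \<in> component S x"
      using x component_self[of v S] by blast
    ultimately show False
      using assms(4) by simp
  qed
  moreover have "finite (components V S)"
    using assms(1) by (simp add: components_def)
  ultimately have "card (components V (insert {u, v} S)) = card (components V S - {?Cu, ?Cv}) + 1"
    by (simp add: components_insert_edge[OF assms(2,3)])
  also have "card (components V S - {?Cu, ?Cv}) = card (components V S) - 2"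
    using in_components distinct assms(1)
    by (simp add: card_Diff_subset components_def)
  finally have "card (components V (insert {u, v} S)) = card (components V S) - 2 + 1" .
  moreover have "card {?Cu, ?Cv} \<le> card (components V S)"
    using in_components assms(1) by (intro card_mono) (auto simp: components_def)
  ultimately show ?thesis
    using distinct by simp
qed

section \<open>The power sum expansion of the chromatic symmetric function\<close>

locale sgraph =
  fixes V :: "'a set" and E :: "'a set set"
  assumes simple_graph: "simple_graph V E"
begin

lemma finite_V: "finite V"
  using simple_graph by (simp add: simple_graph_def)

lemma edgeE:
  assumes "e \<in> E"
  obtains u v where "u \<in> V" "v \<in> V" "u \<noteq> v" "e = {u, v}"
  using simple_graph assms by (auto simp: simple_graph_def)

lemma finite_E: "finite E"
proof (rule finite_subset)
  show "E \<subseteq> Pow V" by (auto elim: edgeE)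
qed (simp add: finite_V)

lemma adj_in_V: "S \<subseteq> E \<Longrightarrow> (x, y) \<in> adj S \<Longrightarrow> x \<in> V \<and> y \<in> V"
  by (auto simp: adj_def doubleton_eq_iff elim!: edgeE)

lemma component_subset:
  assumes "S \<subseteq> E" and "x \<in> V"
  shows "component S x \<subseteq> V"
proof
  fix y assume "y \<in> component S x"
  then have "(x, y) \<in> (adj S)\<^sup>*" by (simp add: component_def)
  then show "y \<in> V"
    by induction (use assms adj_in_V in auto)
qed

lemma finite_components: "finite (components V S)"
  using finite_V by (simp add: components_def)

lemma finite_component_in: "S \<subseteq> E \<Longrightarrow> C \<in> components V S \<Longrightarrow> finite C"
  by (metis componentsE component_subset finite_V finite_subset)

lemma card_component_pos: "S \<subseteq> E \<Longrightarrow> C \<in> components V S \<Longrightarrow> card C > 0"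
  by (metis componentsE component_self card_gt_0_iff empty_iff finite_component_in)

lemma Union_components: "S \<subseteq> E \<Longrightarrow> \<Union>(components V S) = V"
  by (auto simp: components_def dest: component_subset intro: component_self)

lemma card_fiber_eq_sum_components:
  assumes S: "S \<subseteq> E"
  shows "card {v \<in> V. h (component S v) = i} = (\<Sum>C\<in>{C \<in> components V S. h C = i}. card C)"
proof -
  have "v \<in> \<Union>{C \<in> components V S. h C = i}" if "v \<in> V" "h (component S v) = i" for v
    using that component_self[of v S] by (auto simp: components_def)
  moreover have "v \<in> V \<and> h (component S v) = i" if "v \<in> C" "C \<in> components V S" "h C = i" for v C
    using that component_eq component_subset[OF S] by (metis componentsE subsetD)
  ultimately have "{v \<in> V. h (component S v) = i} = \<Union>{C \<in> components V S. h C = i}"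
    by blast
  also have "card \<dots> = (\<Sum>C\<in>{C \<in> components V S. h C = i}. card C)"
    using finite_component_in[OF S]
    by (intro card_Union_disjoint pairwise_subset[OF pairwise_disjnt_components]) auto
  finally show ?thesis .
qed

definition colorings_with_content :: "(nat \<Rightarrow> nat) \<Rightarrow> ('a \<Rightarrow> nat) set" where
  "colorings_with_content \<alpha> = {\<kappa> \<in> V \<rightarrow>\<^sub>E UNIV. \<forall>i. card {v \<in> V. \<kappa> v = i} = \<alpha> i}"

lemma finite_colorings_with_content: "finite (colorings_with_content \<alpha>)"
proof (cases "colorings_with_content \<alpha> = {}")
  case False
  then obtain \<kappa>\<^sub>0 where \<kappa>\<^sub>0: "\<kappa>\<^sub>0 \<in> colorings_with_content \<alpha>" by blast
  have used: "\<alpha> i > 0 \<longleftrightarrow> i \<in> \<kappa> ` V" if "\<kappa> \<in> colorings_with_content \<alpha>" for \<kappa> i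
  proof -
    have "\<alpha> i = card {v \<in> V. \<kappa> v = i}"
      using that by (simp add: colorings_with_content_def)
    then show ?thesis
      using finite_V by (simp add: card_gt_0_iff) blast
  qed
  show ?thesis
  proof (rule finite_subset)
    show "colorings_with_content \<alpha> \<subseteq> V \<rightarrow>\<^sub>E \<kappa>\<^sub>0 ` V"
      using used[OF \<kappa>\<^sub>0] used by (auto simp: colorings_with_content_def PiE_def)
    show "finite (V \<rightarrow>\<^sub>E \<kappa>\<^sub>0 ` V)"
      using finite_V by (simp add: finite_PiE)
  qed
qed simp

lemma monochromatic_lift:
  assumes S: "S \<subseteq> E" and e: "e \<in> S"
  shows "monochromatic (\<lambda>v\<in>V. h (component S v)) e"
proof -
  obtain u v where uv: "u \<in> V" "v \<in> V" "e = {u, v}"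
    using S e by (blast elim: edgeE)
  then have "v \<in> component S u"
    using e by (auto simp: component_def adj_def)
  then have "component S v = component S u"
    by (rule component_eq)
  then show ?thesis
    using uv by (auto simp: monochromatic_def)
qed

lemma bij_betw_lift_to_components:
  assumes S: "S \<subseteq> E"
  shows "bij_betw (\<lambda>h. \<lambda>v\<in>V. h (component S v)) (components V S \<rightarrow>\<^sub>E UNIV)
    {\<kappa> \<in> V \<rightarrow>\<^sub>E UNIV. \<forall>e\<in>S. monochromatic \<kappa> e}"
proof (rule bij_betwI[where g = "\<lambda>\<kappa>. \<lambda>C\<in>components V S. \<kappa> (SOME x. x \<in> C)"])
  show "(\<lambda>h. \<lambda>v\<in>V. h (component S v)) \<in> (components V S \<rightarrow>\<^sub>E UNIV) \<rightarrow>
      {\<kappa> \<in> V \<rightarrow>\<^sub>E UNIV. \<forall>e\<in>S. monochromatic \<kappa> e}"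
    using monochromatic_lift[OF S] by auto
next
  fix h assume h: "h \<in> components V S \<rightarrow>\<^sub>E UNIV"
  have "(SOME y. y \<in> C) \<in> V \<and> component S (SOME y. y \<in> C) = C" if C: "C \<in> components V S" for C
  proof -
    obtain x where x: "x \<in> V" "C = component S x"
      using C by (rule componentsE)
    then have "(SOME y. y \<in> C) \<in> C"
      using someI[of "\<lambda>y. y \<in> C" x] component_self[of x S] by auto
    then show ?thesis
      using x component_subset[OF S] by (metis component_eq subsetD)
  qed
  then show "(\<lambda>C\<in>components V S. (\<lambda>v\<in>V. h (component S v)) (SOME x. x \<in> C)) = h"
    using h by (auto simp: fun_eq_iff PiE_def extensional_def)
next
  fix \<kappa> assume \<kappa>: "\<kappa> \<in> {\<kappa> \<in> V \<rightarrow>\<^sub>E UNIV. \<forall>e\<in>S. monochromatic \<kappa> e}"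
  then have mono: "\<forall>e\<in>S. monochromatic \<kappa> e" by simp
  have "\<kappa> (SOME x. x \<in> component S v) = \<kappa> v" for v
    using monochromatic_component[OF mono someI[of "\<lambda>x. x \<in> component S v", OF component_self]] .
  then show "(\<lambda>v\<in>V. (\<lambda>C\<in>components V S. \<kappa> (SOME x. x \<in> C)) (component S v)) = \<kappa>"
    using \<kappa> by (auto simp: fun_eq_iff components_def PiE_def extensional_def)
qed auto

lemma card_monochromatic_colorings:
  assumes S: "S \<subseteq> E"
  shows "card {\<kappa> \<in> colorings_with_content \<alpha>. \<forall>e\<in>S. monochromatic \<kappa> e}
    = psum_coeff (components V S) card \<alpha>"
proof -
  have content: "card {v \<in> V. (\<lambda>v\<in>V. h (component S v)) v = i}
      = (\<Sum>C\<in>{C \<in> components V S. h C = i}. card C)" for h i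
  proof -
    have "{v \<in> V. (\<lambda>v\<in>V. h (component S v)) v = i} = {v \<in> V. h (component S v) = i}"
      by auto
    then show ?thesis
      using card_fiber_eq_sum_components[OF S] by simp
  qed
  have "bij_betw (\<lambda>h. \<lambda>v\<in>V. h (component S v))
      {h \<in> components V S \<rightarrow>\<^sub>E UNIV. \<forall>i. (\<Sum>C\<in>{C \<in> components V S. h C = i}. card C) = \<alpha> i}
      {\<kappa> \<in> {\<kappa> \<in> V \<rightarrow>\<^sub>E UNIV. \<forall>e\<in>S. monochromatic \<kappa> e}. \<forall>i. card {v \<in> V. \<kappa> v = i} = \<alpha> i}"
    by (rule bij_betw_Collect[OF bij_betw_lift_to_components[OF S]]) (simp only: content)
  moreover have "{\<kappa> \<in> {\<kappa> \<in> V \<rightarrow>\<^sub>E UNIV. \<forall>e\<in>S. monochromatic \<kappa> e}. \<forall>i. card {v \<in> V. \<kappa> v = i} = \<alpha> i}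
      = {\<kappa> \<in> colorings_with_content \<alpha>. \<forall>e\<in>S. monochromatic \<kappa> e}"
    by (auto simp: colorings_with_content_def)
  ultimately show ?thesis
    unfolding psum_coeff_def by (simp add: bij_betw_same_card)
qed

lemma monochromatic_doubleton: "monochromatic \<kappa> {u, v} \<longleftrightarrow> \<kappa> u = \<kappa> v"
  by (auto simp: monochromatic_def)

lemma proper_coloring_iff:
  "proper_coloring V E \<kappa> \<longleftrightarrow> \<kappa> \<in> V \<rightarrow>\<^sub>E UNIV \<and> (\<forall>e\<in>E. \<not> monochromatic \<kappa> e)"
proof -
  have "(\<forall>u v. {u, v} \<in> E \<and> u \<noteq> v \<longrightarrow> \<kappa> u \<noteq> \<kappa> v) \<longleftrightarrow> (\<forall>e\<in>E. \<not> monochromatic \<kappa> e)"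
  proof
    assume proper: "\<forall>u v. {u, v} \<in> E \<and> u \<noteq> v \<longrightarrow> \<kappa> u \<noteq> \<kappa> v"
    show "\<forall>e\<in>E. \<not> monochromatic \<kappa> e"
    proof
      fix e assume "e \<in> E"
      then obtain u v where "u \<noteq> v" "e = {u, v}" by (rule edgeE)
      then show "\<not> monochromatic \<kappa> e"
        using proper \<open>e \<in> E\<close> by (simp add: monochromatic_doubleton)
    qed
  qed (auto simp: monochromatic_doubleton)
  then show ?thesis
    by (simp add: proper_coloring_def)
qed

lemma csf_eq_card_not_monochromatic:
  "csf V E \<alpha> = card {\<kappa> \<in> colorings_with_content \<alpha>. \<forall>e\<in>E. \<not> monochromatic \<kappa> e}"
  unfolding csf_def colorings_with_content_def proper_coloring_iff
  by (rule arg_cong[where f = card]) auto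

lemma zero_not_in_component_sizes:
  assumes "S \<subseteq> E"
  shows "0 \<notin># component_sizes V S"
proof
  assume "0 \<in># component_sizes V S"
  then obtain C where C: "C \<in> components V S" "card C = 0"
    using finite_components by (auto simp: component_sizes_def)
  show False
    using card_component_pos[OF assms C(1)] C(2) by simp
qed

definition signed_count :: "nat multiset \<Rightarrow> int" where
  "signed_count \<mu> = (\<Sum>S | S \<in> Pow E \<and> component_sizes V S = \<mu>. (-1) ^ card S)"

lemma int_csf_eq_sum_p_coeff:
  assumes L: "finite L" and sizes: "component_sizes V ` Pow E \<subseteq> L"
  shows "int (csf V E \<alpha>) = (\<Sum>\<mu>\<in>L. signed_count \<mu> * int (p_coeff \<mu> \<alpha>))"
proof -
  have "int (csf V E \<alpha>) = (\<Sum>S\<in>Pow E. (-1) ^ card S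
      * int (card {\<kappa> \<in> colorings_with_content \<alpha>. \<forall>e\<in>S. monochromatic \<kappa> e}))"
    unfolding csf_eq_card_not_monochromatic
    by (rule int_card_sieve[OF finite_E finite_colorings_with_content])
  also have "\<dots> = (\<Sum>S\<in>Pow E. (-1) ^ card S * int (p_coeff (component_sizes V S) \<alpha>))"
    by (intro sum.cong refl)
      (simp add: card_monochromatic_colorings psum_coeff_eq_p_coeff finite_components component_sizes_def)
  also have "\<dots> = (\<Sum>\<mu>\<in>L. \<Sum>S | S \<in> Pow E \<and> component_sizes V S = \<mu>.
      (-1) ^ card S * int (p_coeff (component_sizes V S) \<alpha>))"
    by (rule sum.group[symmetric, OF _ L sizes]) (simp add: finite_E)
  also have "\<dots> = (\<Sum>\<mu>\<in>L. signed_count \<mu> * int (p_coeff \<mu> \<alpha>))"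
    unfolding signed_count_def sum_distrib_right by (intro sum.cong refl) simp
  finally show ?thesis .
qed

section \<open>Isolated vertices and leaves\<close>

definition isolated :: "'a set set \<Rightarrow> 'a set" where
  "isolated S = {v \<in> V. \<forall>e\<in>S. v \<notin> e}"

definition leaves_on :: "'a set \<Rightarrow> 'a set" where
  "leaves_on e = {w \<in> e. \<forall>e'\<in>E. w \<in> e' \<longrightarrow> e' = e}"

lemma component_eq_singleton_iff:
  assumes S: "S \<subseteq> E" and v: "v \<in> V"
  shows "component S v = {v} \<longleftrightarrow> v \<in> isolated S"
proof
  assume single: "component S v = {v}"
  have "v \<notin> e" if "e \<in> S" for e
  proof
    assume "v \<in> e"
    obtain a b where ab: "a \<noteq> b" "e = {a, b}"
      using S \<open>e \<in> S\<close> by (blast elim: edgeE)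
    define w where "w = (if v = a then b else a)"
    have "w \<noteq> v" and "{v, w} \<in> S"
      using ab \<open>v \<in> e\<close> \<open>e \<in> S\<close> by (auto simp: w_def insert_commute)
    then have "w \<in> component S v"
      by (simp add: component_def adj_def r_into_rtrancl)
    then show False
      using single \<open>w \<noteq> v\<close> by simp
  qed
  then show "v \<in> isolated S"
    using v by (simp add: isolated_def)
next
  assume iso: "v \<in> isolated S"
  have "y = v" if "(v, y) \<in> (adj S)\<^sup>*" for y
    using that iso by (cases rule: converse_rtranclE) (auto simp: adj_def isolated_def)
  then show "component S v = {v}"
    using component_self[of v S] by (auto simp: component_def)
qed

lemma count_one_component_sizes:
  assumes S: "S \<subseteq> E"
  shows "count (component_sizes V S) 1 = card (isolated S)"
proof -
  have "{C \<in> components V S. card C = 1} = (\<lambda>v. {v}) ` isolated S"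
  proof
    show "{C \<in> components V S. card C = 1} \<subseteq> (\<lambda>v. {v}) ` isolated S"
    proof
      fix C assume "C \<in> {C \<in> components V S. card C = 1}"
      then have C: "C \<in> components V S" "card C = 1" by simp_all
      obtain x where x: "x \<in> V" "C = component S x"
        using C(1) by (rule componentsE)
      obtain y where "C = {y}"
        using C(2) by (rule card_1_singletonE)
      then have "C = {x}"
        using x(2) component_self[of x S] by simp
      then have "x \<in> isolated S"
        using component_eq_singleton_iff[OF S x(1)] x(2) by simp
      then show "C \<in> (\<lambda>v. {v}) ` isolated S"
        using \<open>C = {x}\<close> by blast
    qed
    show "(\<lambda>v. {v}) ` isolated S \<subseteq> {C \<in> components V S. card C = 1}"
    proof
      fix C assume "C \<in> (\<lambda>v. {v}) ` isolated S"
      then obtain v where v: "v \<in> isolated S" "C = {v}" by blast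
      then have "v \<in> V" by (simp add: isolated_def)
      then have "component S v = C"
        using component_eq_singleton_iff[OF S] v by simp
      then show "C \<in> {C \<in> components V S. card C = 1}"
        using \<open>v \<in> V\<close> v(2) unfolding components_def by auto
    qed
  qed
  then show ?thesis
    unfolding component_sizes_def count_image_mset_mset_set[OF finite_components]
    by (simp add: card_image)
qed

lemma degree_eq_card_incident: "degree E v = card {e \<in> E. v \<in> e}"
proof -
  have inj: "inj_on (\<lambda>u. {u, v}) {u. {u, v} \<in> E}"
    by (rule inj_onI) (auto simp: doubleton_eq_iff)
  have im: "(\<lambda>u. {u, v}) ` {u. {u, v} \<in> E} = {e \<in> E. v \<in> e}"
  proof
    show "{e \<in> E. v \<in> e} \<subseteq> (\<lambda>u. {u, v}) ` {u. {u, v} \<in> E}"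
    proof
      fix e assume e: "e \<in> {e \<in> E. v \<in> e}"
      then obtain a b where ab: "e = {a, b}"
        by (blast elim: edgeE)
      have "e = {if a = v then b else a, v}"
        using e unfolding ab by auto
      then show "e \<in> (\<lambda>u. {u, v}) ` {u. {u, v} \<in> E}"
        using e by (intro image_eqI[of _ _ "if a = v then b else a"]) auto
    qed
  qed auto
  show ?thesis
    using card_image[OF inj] unfolding im degree_def by simp
qed

lemma leaves_eq_UN_leaves_on: "leaves V E = (\<Union>e\<in>E. leaves_on e)"
proof (rule set_eqI)
  fix v
  have "card {e \<in> E. v \<in> e} = 1 \<longleftrightarrow> (\<exists>e\<in>E. v \<in> leaves_on e)"
  proof
    assume "card {e \<in> E. v \<in> e} = 1"
    then obtain e where e: "{e \<in> E. v \<in> e} = {e}"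
      by (rule card_1_singletonE)
    then have "e \<in> E" "v \<in> e"
      by blast+
    moreover have "e' = e" if "e' \<in> E" "v \<in> e'" for e'
      using that e by blast
    ultimately show "\<exists>e\<in>E. v \<in> leaves_on e"
      by (auto simp: leaves_on_def)
  next
    assume "\<exists>e\<in>E. v \<in> leaves_on e"
    then obtain e where "e \<in> E" "v \<in> e" "\<forall>e'\<in>E. v \<in> e' \<longrightarrow> e' = e"
      by (auto simp: leaves_on_def)
    then have "{e \<in> E. v \<in> e} = {e}"
      by blast
    then show "card {e \<in> E. v \<in> e} = 1"
      by simp
  qed
  moreover have "v \<in> V" if "e \<in> E" "v \<in> leaves_on e" for e
    using that by (auto simp: leaves_on_def elim: edgeE)
  ultimately show "v \<in> leaves V E \<longleftrightarrow> v \<in> (\<Union>e\<in>E. leaves_on e)"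
    unfolding leaves_def degree_eq_card_incident by blast
qed

lemma card_leaves_eq_sum: "card (leaves V E) = (\<Sum>e\<in>E. card (leaves_on e))"
  unfolding leaves_eq_UN_leaves_on
proof (rule card_UN_disjoint[OF finite_E])
  show "\<forall>e\<in>E. finite (leaves_on e)"
    by (auto simp: leaves_on_def elim!: edgeE)
  show "\<forall>e\<in>E. \<forall>e'\<in>E. e \<noteq> e' \<longrightarrow> leaves_on e \<inter> leaves_on e' = {}"
    by (auto simp: leaves_on_def)
qed

lemma card_isolated_Diff_edge:
  assumes e: "e \<in> E"
  shows "card (isolated (E - {e})) = card (isolated E) + card (leaves_on e)"
proof -
  have "e \<subseteq> V"
    using e by (auto elim: edgeE)
  then have "isolated (E - {e}) = isolated E \<union> leaves_on e"
    using e by (auto simp: isolated_def leaves_on_def)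
  moreover have "isolated E \<inter> leaves_on e = {}"
    using e by (auto simp: isolated_def leaves_on_def)
  moreover have "finite (isolated E)" "finite (leaves_on e)"
    using finite_V \<open>e \<subseteq> V\<close> by (auto simp: isolated_def leaves_on_def intro: finite_subset)
  ultimately show ?thesis
    by (simp add: card_Un_disjoint)
qed

definition spanning_subgraph_count :: "nat multiset \<Rightarrow> nat" where
  "spanning_subgraph_count \<mu> = card {S. S \<in> Pow E \<and> component_sizes V S = \<mu>}"

definition singleton_total :: "nat \<Rightarrow> nat" where
  "singleton_total k =
    (\<Sum>S | S \<in> Pow E \<and> size (component_sizes V S) = k. count (component_sizes V S) 1)"

lemma component_sizes_image: "component_sizes V ` Pow E = {\<mu>. spanning_subgraph_count \<mu> > 0}"
  using finite_E by (auto simp: spanning_subgraph_count_def card_gt_0_iff)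

lemma sum_mset_component_sizes:
  assumes S: "S \<subseteq> E"
  shows "sum_mset (component_sizes V S) = card V"
proof -
  have "sum_mset (component_sizes V S) = (\<Sum>C\<in>components V S. card C)"
    unfolding component_sizes_def using finite_components by (simp add: sum_unfold_sum_mset)
  also have "\<dots> = card (\<Union>(components V S))"
    using finite_component_in[OF S] pairwise_disjnt_components
    by (intro card_Union_disjoint[symmetric]) auto
  finally show ?thesis
    using Union_components[OF S] by simp
qed

lemma singleton_total_eq_sum:
  "singleton_total k = (\<Sum>\<mu> | spanning_subgraph_count \<mu> > 0 \<and> size \<mu> = k.
      spanning_subgraph_count \<mu> * count \<mu> 1)"
proof -
  let ?P = "{S. S \<in> Pow E \<and> size (component_sizes V S) = k}"
  have pos: "spanning_subgraph_count (component_sizes V S) > 0" if "S \<in> Pow E" for S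
    using component_sizes_image that by blast
  have "finite {\<mu>. spanning_subgraph_count \<mu> > 0}"
    unfolding component_sizes_image[symmetric] using finite_E by simp
  then have fin: "finite {\<mu>. spanning_subgraph_count \<mu> > 0 \<and> size \<mu> = k}"
    by (rule finite_subset[rotated]) auto
  have "singleton_total k = (\<Sum>\<mu> | spanning_subgraph_count \<mu> > 0 \<and> size \<mu> = k.
      \<Sum>S | S \<in> ?P \<and> component_sizes V S = \<mu>. count (component_sizes V S) 1)"
    unfolding singleton_total_def
    by (rule sum.group[symmetric]) (use finite_E pos fin in auto)
  also have "\<dots> = (\<Sum>\<mu> | spanning_subgraph_count \<mu> > 0 \<and> size \<mu> = k.
      spanning_subgraph_count \<mu> * count \<mu> 1)"
  proof (rule sum.cong[OF refl])
    fix \<mu> assume "\<mu> \<in> {\<mu>. spanning_subgraph_count \<mu> > 0 \<and> size \<mu> = k}"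
    then have "{S. S \<in> ?P \<and> component_sizes V S = \<mu>} = {S. S \<in> Pow E \<and> component_sizes V S = \<mu>}"
      by auto
    then show "(\<Sum>S | S \<in> ?P \<and> component_sizes V S = \<mu>. count (component_sizes V S) 1)
        = spanning_subgraph_count \<mu> * count \<mu> 1"
      by (simp add: spanning_subgraph_count_def)
  qed
  finally show ?thesis .
qed

end

lemma signed_count_eq_if_csf_eq:
  assumes G\<^sub>1: "sgraph V\<^sub>1 E\<^sub>1" and G\<^sub>2: "sgraph V\<^sub>2 E\<^sub>2" and csf: "csf V\<^sub>1 E\<^sub>1 = csf V\<^sub>2 E\<^sub>2"
  shows "sgraph.signed_count V\<^sub>1 E\<^sub>1 \<mu> = sgraph.signed_count V\<^sub>2 E\<^sub>2 \<mu>"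
proof -
  interpret G\<^sub>1: sgraph V\<^sub>1 E\<^sub>1 by (rule G\<^sub>1)
  interpret G\<^sub>2: sgraph V\<^sub>2 E\<^sub>2 by (rule G\<^sub>2)
  define L where "L = component_sizes V\<^sub>1 ` Pow E\<^sub>1 \<union> component_sizes V\<^sub>2 ` Pow E\<^sub>2"
  have L: "finite L"
    using G\<^sub>1.finite_E G\<^sub>2.finite_E by (simp add: L_def)
  show ?thesis
  proof (cases "\<mu> \<in> L")
    case False
    then have "{S. S \<in> Pow E\<^sub>1 \<and> component_sizes V\<^sub>1 S = \<mu>} = {}"
      and "{S. S \<in> Pow E\<^sub>2 \<and> component_sizes V\<^sub>2 S = \<mu>} = {}"
      by (auto simp: L_def)
    then show ?thesis
      by (simp only: G\<^sub>1.signed_count_def G\<^sub>2.signed_count_def sum.empty)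
  next
    case True
    have "G\<^sub>1.signed_count \<mu> - G\<^sub>2.signed_count \<mu> = 0"
    proof (rule p_coeff_linear_independent[OF L _ _ True])
      show "0 \<notin># \<nu>" if "\<nu> \<in> L" for \<nu>
        using that G\<^sub>1.zero_not_in_component_sizes G\<^sub>2.zero_not_in_component_sizes by (auto simp: L_def)
      show "(\<Sum>\<nu>\<in>L. (G\<^sub>1.signed_count \<nu> - G\<^sub>2.signed_count \<nu>) * int (p_coeff \<nu> \<alpha>)) = 0" for \<alpha>
        using G\<^sub>1.int_csf_eq_sum_p_coeff[OF L] G\<^sub>2.int_csf_eq_sum_p_coeff[OF L] csf
        by (simp add: L_def left_diff_distrib sum_subtractf)
    qed
    then show ?thesis by simp
  qed
qed

section \<open>Forests\<close>

lemma is_cycle_path_closing_edge: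
  assumes path: "rtrancl_path (\<lambda>a b. (a, b) \<in> adj S) u xs v" and "distinct (u # xs)"
    and "length xs \<ge> 2" and "insert {u, v} S \<subseteq> E"
  shows "is_cycle E (u # xs)"
proof -
  have "xs \<noteq> []"
    using assms(3) by auto
  with path have last: "last xs = v"
    by (rule rtrancl_path_last)
  have "{(u # xs) ! i, (u # xs) ! ((i + 1) mod length (u # xs))} \<in> E"
    if "i < length (u # xs)" for i
  proof (cases "i < length xs")
    case True
    then show ?thesis
      using rtrancl_path_nth[OF path True] assms(4) by (auto simp: adj_def)
  next
    case False
    then have "i = length xs" using that by simp
    then show ?thesis
      using assms(4) last \<open>xs \<noteq> []\<close> by (simp add: last_conv_nth insert_commute)
  qed
  then show ?thesis
    using assms(2,3) by (simp add: is_cycle_def)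
qed

locale sforest = sgraph +
  assumes acyclic: "\<nexists>vs. is_cycle E vs"
begin

text \<open>Otherwise a simple \<open>u\<close>-\<open>v\<close> path in \<open>S\<close> closes up with the edge \<open>{u, v}\<close> to a cycle.\<close>

lemma not_connected_without_edge:
  assumes S: "insert {u, v} S \<subseteq> E" and new: "{u, v} \<notin> S" and "u \<noteq> v"
  shows "v \<notin> component S u"
proof
  assume "v \<in> component S u"
  then have "(\<lambda>a b. (a, b) \<in> adj S)\<^sup>*\<^sup>* u v"
    by (simp add: component_def rtranclp_rtrancl_eq)
  then obtain xs where path: "rtrancl_path (\<lambda>a b. (a, b) \<in> adj S) u xs v" and "distinct (u # xs)"
    by (metis rtranclp_eq_rtrancl_path rtrancl_path_distinct)
  have "xs \<noteq> []"
    using path \<open>u \<noteq> v\<close> by (auto elim: rtrancl_path.cases)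
  moreover have "xs \<noteq> [v]"
    using rtrancl_path_nth[OF path, of 0] new by (auto simp: adj_def)
  moreover have "last xs = v"
    using path \<open>xs \<noteq> []\<close> by (rule rtrancl_path_last)
  ultimately have "length xs \<ge> 2"
    by (cases xs) (auto simp: Suc_le_eq)
  then have "is_cycle E (u # xs)"
    using is_cycle_path_closing_edge[OF path \<open>distinct (u # xs)\<close> _ S] by simp
  then show False
    using acyclic by blast
qed

lemma card_components_add_card:
  assumes "S \<subseteq> E"
  shows "card (components V S) + card S = card V"
proof -
  have "finite S"
    using assms finite_E finite_subset by blast
  then show ?thesis
    using assms
  proof (induction S rule: finite_induct)
    case empty
    have "component ({} :: 'a set set) = (\<lambda>x. {x})"
      by (auto simp: fun_eq_iff component_def adj_def)
    then show ?case
      unfolding components_def by (simp add: card_image)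
  next
    case (insert e S)
    obtain u v where uv: "u \<in> V" "v \<in> V" "u \<noteq> v" "e = {u, v}"
      using insert.prems by (blast elim: edgeE)
    then have "v \<notin> component S u"
      using insert.prems insert.hyps(2) by (intro not_connected_without_edge) auto
    then have "card (components V (insert e S)) + 1 = card (components V S)"
      using card_components_insert_edge[OF finite_V uv(1,2)] uv(4) by simp
    then show ?case
      using insert by simp
  qed
qed

lemma size_component_sizes: "S \<subseteq> E \<Longrightarrow> size (component_sizes V S) = card V - card S"
  using card_components_add_card[of S] finite_components by (simp add: component_sizes_def)

lemma card_E_le_card_V: "card E \<le> card V"
  using card_components_add_card[of E] by simp

lemma int_spanning_subgraph_count: "int (spanning_subgraph_count \<mu>) = \<bar>signed_count \<mu>\<bar>"
proof -
  have "card S = card V - size \<mu>" if S: "S \<in> Pow E" "component_sizes V S = \<mu>" for S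
  proof -
    have "card S \<le> card V"
      using card_mono[OF finite_E] S(1) card_E_le_card_V by (meson PowD le_trans)
    then show ?thesis
      using size_component_sizes[of S] S by simp
  qed
  then have "signed_count \<mu> = (\<Sum>S | S \<in> Pow E \<and> component_sizes V S = \<mu>. (-1) ^ (card V - size \<mu>))"
    unfolding signed_count_def by (intro sum.cong) auto
  then show ?thesis
    by (simp add: spanning_subgraph_count_def abs_mult)
qed

lemma size_component_sizes_eq_iff:
  assumes "S \<subseteq> E"
  shows "size (component_sizes V S) = card V - card E + k \<longleftrightarrow> card S + k = card E"
  using size_component_sizes[OF assms] card_mono[OF finite_E assms] card_E_le_card_V by linarith

lemma Min_size_component_sizes: "Min (size ` component_sizes V ` Pow E) = card V - card E"
proof (rule Min_eqI)
  show "finite (size ` component_sizes V ` Pow E)"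
    using finite_E by simp
  show "card V - card E \<le> k" if k: "k \<in> size ` component_sizes V ` Pow E" for k
  proof -
    obtain S where "S \<subseteq> E" "k = size (component_sizes V S)"
      using k by auto
    then show ?thesis
      using size_component_sizes card_mono[OF finite_E \<open>S \<subseteq> E\<close>] by (simp add: diff_le_mono2)
  qed
  have "component_sizes V E \<in> component_sizes V ` Pow E"
    by simp
  then show "card V - card E \<in> size ` component_sizes V ` Pow E"
    by (rule rev_image_eqI) (simp add: size_component_sizes)
qed

lemma card_leaves_eq_singleton_total:
  "int (card (leaves V E))
    = int (singleton_total (card V - card E + 1)) - int (card E) * int (singleton_total (card V - card E))"
proof -
  have "{S. S \<in> Pow E \<and> size (component_sizes V S) = card V - card E} = {E}"
    using size_component_sizes_eq_iff[of _ 0] card_subset_eq[OF finite_E] by auto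
  then have T\<^sub>0: "singleton_total (card V - card E) = card (isolated E)"
    unfolding singleton_total_def using count_one_component_sizes[of E] by simp
  have one_less: "{S. S \<in> Pow E \<and> size (component_sizes V S) = card V - card E + 1} = (\<lambda>e. E - {e}) ` E"
  proof (rule set_eqI)
    fix S
    show "S \<in> {S. S \<in> Pow E \<and> size (component_sizes V S) = card V - card E + 1}
        \<longleftrightarrow> S \<in> (\<lambda>e. E - {e}) ` E"
      using size_component_sizes_eq_iff[of S 1] subset_card_plus_one_iff[OF finite_E, of S]
      by (cases "S \<subseteq> E") auto
  qed
  have "inj_on (\<lambda>e. E - {e}) E"
    by (auto simp: inj_on_def)
  then have "singleton_total (card V - card E + 1) = (\<Sum>e\<in>E. count (component_sizes V (E - {e})) 1)"
    unfolding singleton_total_def one_less by (simp add: sum.reindex)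
  also have "\<dots> = (\<Sum>e\<in>E. card (isolated (E - {e})))"
    by (intro sum.cong refl count_one_component_sizes) auto
  also have "\<dots> = card E * card (isolated E) + card (leaves V E)"
    by (simp add: card_isolated_Diff_edge sum.distrib card_leaves_eq_sum)
  finally show ?thesis
    using T\<^sub>0 by simp
qed

end

lemma card_leaves_eq_if_spanning_subgraph_counts_eq:
  assumes F\<^sub>1: "sforest V\<^sub>1 E\<^sub>1" and F\<^sub>2: "sforest V\<^sub>2 E\<^sub>2"
    and counts: "\<And>\<mu>. sgraph.spanning_subgraph_count V\<^sub>1 E\<^sub>1 \<mu> = sgraph.spanning_subgraph_count V\<^sub>2 E\<^sub>2 \<mu>"
  shows "card (leaves V\<^sub>1 E\<^sub>1) = card (leaves V\<^sub>2 E\<^sub>2)"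
proof -
  interpret F\<^sub>1: sforest V\<^sub>1 E\<^sub>1 by (rule F\<^sub>1)
  interpret F\<^sub>2: sforest V\<^sub>2 E\<^sub>2 by (rule F\<^sub>2)
  have sizes: "component_sizes V\<^sub>1 ` Pow E\<^sub>1 = component_sizes V\<^sub>2 ` Pow E\<^sub>2"
    by (simp add: F\<^sub>1.component_sizes_image F\<^sub>2.component_sizes_image counts)
  then obtain S where "S \<subseteq> E\<^sub>2" "component_sizes V\<^sub>2 S = component_sizes V\<^sub>1 {}"
    by (metis Pow_iff empty_subsetI image_iff)
  then have n: "card V\<^sub>1 = card V\<^sub>2"
    using F\<^sub>1.sum_mset_component_sizes[of "{}"] F\<^sub>2.sum_mset_component_sizes[of S] by simp
  have m: "card E\<^sub>1 = card E\<^sub>2"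
    using F\<^sub>1.Min_size_component_sizes F\<^sub>2.Min_size_component_sizes sizes n
      F\<^sub>1.card_E_le_card_V F\<^sub>2.card_E_le_card_V by simp
  have "F\<^sub>1.singleton_total k = F\<^sub>2.singleton_total k" for k
    by (simp add: F\<^sub>1.singleton_total_eq_sum F\<^sub>2.singleton_total_eq_sum counts)
  then show ?thesis
    using F\<^sub>1.card_leaves_eq_singleton_total F\<^sub>2.card_leaves_eq_singleton_total n m by simp
qed

theorem mainTheorem6:
  fixes V1 :: "'a set" and E1 :: "'a set set"
    and V2 :: "'b set" and E2 :: "'b set set"
  assumes "forest V1 E1" and "forest V2 E2"
    and "csf V1 E1 = csf V2 E2"
  shows "card (leaves V1 E1) = card (leaves V2 E2)"
proof -
  interpret F\<^sub>1: sforest V1 E1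
    using assms(1) by unfold_locales (auto simp: forest_def)
  interpret F\<^sub>2: sforest V2 E2
    using assms(2) by unfold_locales (auto simp: forest_def)
  have "F\<^sub>1.signed_count \<mu> = F\<^sub>2.signed_count \<mu>" for \<mu>
    using signed_count_eq_if_csf_eq[OF F\<^sub>1.sgraph_axioms F\<^sub>2.sgraph_axioms assms(3)] .
  then have "F\<^sub>1.spanning_subgraph_count \<mu> = F\<^sub>2.spanning_subgraph_count \<mu>" for \<mu>
    using F\<^sub>1.int_spanning_subgraph_count F\<^sub>2.int_spanning_subgraph_count by (metis of_nat_eq_iff)
  then show ?thesis
    using card_leaves_eq_if_spanning_subgraph_counts_eq F\<^sub>1.sforest_axioms F\<^sub>2.sforest_axioms by blast
qed

end
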